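(* Let $m\geq 11$ and $k\geq 1$ be integers and let $c(x)=1+\sum_{j\in\{1,3,4,5\}}(x^j+x^{m-j})\in\mathbb{F}_2[x]$. Then $\gcd(c(x^k),x^m-1)=1$ if and only if $\gcd(m,3k)=\gcd(m,k)$.
   Context: All polynomials are over $\mathbb{F}_2$. *)

theory Defs
  imports "HOL-Computational_Algebra.Computational_Algebra" "Berlekamp_Zassenhaus.Finite_Field"
begin

text \<open>F_2 is rendered as the finite field bool mod_ring (integers modulo CARD(bool) = 2).\<close>

type_synonym gf2 = "bool mod_ring"

definition c_poly :: "nat \<Rightarrow> gf2 poly" where
  "c_poly m = 1 + (\<Sum>j\<in>{1,3,4,5::nat}. Polynomial.monom 1 j + Polynomial.monom 1 (m - j))"

end

theory Submission
  imports Defs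
begin

text \<open>Write t = x^k. Over F_2 we have (1 + t + t^2)^4 = 1 + t^4 + t^8, and t^m = 1 modulo
  x^m - 1, so t^5 c(t) = (1 + t + t^2)^5 modulo x^m - 1. As x is a unit modulo x^m - 1, c(x^k) is
  coprime to x^m - 1 iff 1 + t + t^2 is. Finally (t - 1)(1 + t + t^2) = x^(3k) - 1,
  gcd(x^a - 1, x^b - 1) = x^gcd(a, b) - 1 and 1 + t + t^2 = 3 = 1 modulo t - 1, so 1 + t + t^2
  is coprime to x^m - 1 iff x^gcd(m, 3k) - 1 divides x^k - 1, i.e. iff gcd(m, 3k) = gcd(m, k).\<close>

lemma power_sub_one_dvd_power_sub_one:
  fixes x :: "'a::comm_ring_1"
  assumes "d dvd e"
  shows "x ^ d - 1 dvd x ^ e - 1"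
proof -
  obtain q where "e = d * q" using assms by blast
  then have "x ^ e - 1 = (x ^ d - 1) * (\<Sum>i<q. (x ^ d) ^ i)"
    by (simp add: power_mult power_diff_1_eq)
  then show ?thesis by simp
qed

lemma dvd_power_sub_one_gcd:
  fixes p x :: "'a::comm_ring_1"
  assumes "p dvd x ^ a - 1" and "p dvd x ^ b - 1"
  shows "p dvd x ^ gcd a b - 1"
proof (cases "a = 0")
  case True
  then show ?thesis using assms by simp
next
  case False
  then obtain s t where st: "a * s = b * t + gcd a b" using bezout_nat by blast
  have "p dvd x ^ (a * s) - 1"
    by (rule dvd_trans[OF assms(1) power_sub_one_dvd_power_sub_one]) simp
  moreover have "p dvd x ^ (b * t) - 1"
    by (rule dvd_trans[OF assms(2) power_sub_one_dvd_power_sub_one]) simp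
  moreover have "x ^ gcd a b - 1 = (x ^ (a * s) - 1) - (x ^ (b * t) - 1) * x ^ gcd a b"
    by (simp add: st power_add algebra_simps)
  ultimately show ?thesis by (metis dvd_diff dvd_mult2)
qed

lemma degree_x_pow_sub_one:
  assumes "0 < n"
  shows "degree ([:0, 1:] ^ n - 1 :: 'a::comm_ring_1 poly) = n"
proof -
  have "degree ([:0, 1:] ^ n + (- 1) :: 'a poly) = degree ([:0, 1:] ^ n :: 'a poly)"
    using assms by (intro degree_add_eq_left) (simp add: degree_linear_power)
  then show ?thesis by (simp add: degree_linear_power)
qed

lemma x_pow_sub_one_dvd_iff:
  "([:0, 1:] ^ a - 1 dvd [:0, 1:] ^ b - (1 :: 'a::field poly)) \<longleftrightarrow> a dvd b"
proof
  let ?X = "[:0, 1:] :: 'a poly"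
  assume dvd: "?X ^ a - 1 dvd ?X ^ b - 1"
  show "a dvd b"
  proof (cases "a = 0")
    case True
    then show ?thesis using dvd degree_x_pow_sub_one[of b, where 'a='a] by fastforce
  next
    case False
    then have "?X ^ a - 1 dvd ?X ^ gcd a b - 1"
      using dvd by (intro dvd_power_sub_one_gcd) simp_all
    then have "degree (?X ^ a - 1) \<le> degree (?X ^ gcd a b - 1)"
      using False degree_x_pow_sub_one[of "gcd a b", where 'a='a]
      by (intro dvd_imp_degree_le) auto
    then have "a \<le> gcd a b"
      using False by (simp add: degree_x_pow_sub_one)
    then show ?thesis
      using False by (metis gcd_dvd2 gcd_le1_nat le_antisym)
  qed
qed (rule power_sub_one_dvd_power_sub_one)

lemma coprime_left_iff_of_dvd_diff:
  fixes a b q :: "'a::ring_gcd"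
  assumes "q dvd a - b"
  shows "coprime a q \<longleftrightarrow> coprime b q"
proof -
  obtain r where "a = r * q + b"
    using assms by (metis diff_add_cancel dvdE mult.commute)
  then show ?thesis
    by (simp add: coprime_iff_gcd_eq_1 gcd.commute[of _ q] gcd_add_mult)
qed

lemma coprime_power_power_sub_one:
  fixes x :: "'a::ring_gcd"
  assumes "0 < m"
  shows "coprime (x ^ j) (x ^ m - 1)"
proof -
  have "coprime (x ^ m) (x ^ m - 1)" by simp
  then show ?thesis using assms by (simp only: coprime_power_left_iff) auto
qed

lemma coprime_trinomial_x_pow_sub_one_iff:
  fixes m k :: nat
  assumes three: "(3 :: 'a::field_gcd) \<noteq> 0"
  defines "t \<equiv> [:0, 1:] ^ k :: 'a poly"
  shows "coprime (1 + t + t\<^sup>2) ([:0, 1:] ^ m - 1) \<longleftrightarrow> gcd m (3 * k) = gcd m k"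
proof
  let ?X = "[:0, 1:] :: 'a poly"
  let ?B = "1 + t + t\<^sup>2"
  have factor: "(t - 1) * ?B = ?X ^ (3 * k) - 1"
    by (simp add: t_def power_mult[symmetric] mult.commute[of k] algebra_simps power2_eq_square
      numeral_3_eq_3 power_add)
  show "gcd m (3 * k) = gcd m k" if coprime: "coprime ?B (?X ^ m - 1)"
  proof -
    define g where "g = gcd m (3 * k)"
    have "?X ^ g - 1 dvd ?X ^ m - 1"
      unfolding g_def by (intro power_sub_one_dvd_power_sub_one) simp
    then have "coprime (?X ^ g - 1) ?B"
      using coprime coprime_divisors coprime_commute dvd_refl by blast
    moreover have "?X ^ g - 1 dvd (t - 1) * ?B"
      unfolding factor g_def by (intro power_sub_one_dvd_power_sub_one) simp
    ultimately have "?X ^ g - 1 dvd t - 1"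
      by (simp add: coprime_dvd_mult_left_iff)
    then have "g dvd k" by (simp add: t_def x_pow_sub_one_dvd_iff)
    then show ?thesis
      by (simp add: g_def dvd_antisym)
  qed
  show "coprime ?B (?X ^ m - 1)" if gcd_eq: "gcd m (3 * k) = gcd m k"
  proof (rule coprimeI)
    fix d assume dB: "d dvd ?B" and dm: "d dvd ?X ^ m - 1"
    have "d dvd ?X ^ (3 * k) - 1" unfolding factor[symmetric] using dB by simp
    then have "d dvd ?X ^ gcd m k - 1"
      using dm dvd_power_sub_one_gcd[of d ?X m "3 * k"] gcd_eq by simp
    moreover have "?X ^ gcd m k - 1 dvd t - 1"
      unfolding t_def by (intro power_sub_one_dvd_power_sub_one) simp
    ultimately have "d dvd t - 1" by (rule dvd_trans)
    moreover have "?B = (t - 1) * (t + 2) + 3"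
      by (simp add: algebra_simps power2_eq_square)
    ultimately have "d dvd 3"
      using dB by (metis dvd_add_right_iff dvd_mult2)
    moreover have "is_unit (3 :: 'a poly)"
      using three by (simp add: numeral_poly is_unit_const_poly_iff)
    ultimately show "is_unit d" by (rule dvd_unit_imp_unit)
  qed
qed

lemma c_times_power_five_char_two:
  fixes t u :: "'a::comm_ring_1"
  assumes "CHAR('a) = 2"
  shows "t ^ 5 * (1 + t + t ^ 3 + t ^ 4 + t ^ 5 + u * (1 + t + t\<^sup>2 + t ^ 4))
    = (1 + t + t\<^sup>2) ^ 5 + (t ^ 5 * u - 1) * (1 + t + t\<^sup>2 + t ^ 4)"
proof -
  have square_add: "(a + b)\<^sup>2 = a\<^sup>2 + b\<^sup>2" for a b :: 'a
    using of_nat_CHAR[where 'a = 'a] assms by (simp add: power2_sum)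
  have "(1 + t + t\<^sup>2) ^ 4 = ((1 + t + t\<^sup>2)\<^sup>2)\<^sup>2"
    by (simp flip: power_mult)
  also have "\<dots> = 1 + t ^ 4 + t ^ 8"
    by (simp add: square_add flip: power_mult)
  finally have frobenius: "(1 + t + t\<^sup>2) ^ 4 = 1 + t ^ 4 + t ^ 8" .
  have "(1 + t + t\<^sup>2) ^ 5 = (1 + t + t\<^sup>2) * (1 + t + t\<^sup>2) ^ 4"
    by (simp add: eval_nat_numeral)
  also have "\<dots> = (1 + t + t\<^sup>2) * (1 + t ^ 4 + t ^ 8)"
    by (simp only: frobenius)
  finally show ?thesis
    by (simp add: algebra_simps eval_nat_numeral)
qed

lemma pcompose_monom_one: "pcompose (Polynomial.monom 1 n) q = (q :: 'a::comm_semiring_1 poly) ^ n"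
  by (induction n) (simp_all add: monom_altdef pcompose_mult pcompose_pCons)

lemma pcompose_c_poly:
  assumes "5 \<le> m"
  shows "pcompose (c_poly m) q
    = 1 + q + q ^ 3 + q ^ 4 + q ^ 5 + q ^ (m - 5) * (1 + q + q\<^sup>2 + q ^ 4)"
proof -
  obtain n where "m = n + 5" using assms by (metis le_add_diff_inverse2)
  then show ?thesis
    by (simp add: c_poly_def pcompose_add pcompose_1 pcompose_sum pcompose_monom_one
      power_add algebra_simps power2_eq_square)
qed

lemma three_gf2_neq_zero: "(3 :: gf2) \<noteq> 0"
  using of_nat_eq_0_iff_char_dvd[of 3, where 'a = gf2] by simp

theorem proposition3:
  fixes m k :: nat
  assumes "m \<ge> 11" and "k \<ge> 1"
  shows "gcd (pcompose (c_poly m) (Polynomial.monom 1 k)) (Polynomial.monom 1 m - 1) = 1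
           \<longleftrightarrow> gcd m (3 * k) = gcd m k"
proof -
  let ?X = "[:0, 1:] :: gf2 poly"
  define t where "t = ?X ^ k"
  define C where "C = pcompose (c_poly m) (Polynomial.monom 1 k)"
  define Q where "Q = ?X ^ m - 1"
  have monom_eq: "Polynomial.monom 1 n = ?X ^ n" for n
    by (simp add: monom_altdef)
  have "t ^ 5 * C = (1 + t + t\<^sup>2) ^ 5 + (?X ^ (k * m) - 1) * (1 + t + t\<^sup>2 + t ^ 4)"
    using assms(1) c_times_power_five_char_two[of t "t ^ (m - 5)"]
    by (simp add: C_def monom_eq pcompose_c_poly t_def power_mult flip: power_add)
  moreover have "Q dvd ?X ^ (k * m) - 1"
    unfolding Q_def by (intro power_sub_one_dvd_power_sub_one) simp
  ultimately have Q_dvd: "Q dvd t ^ 5 * C - (1 + t + t\<^sup>2) ^ 5"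
    by simp
  have "coprime (t ^ 5) Q"
    using assms(1) coprime_power_power_sub_one[of m ?X "k * 5"]
    by (simp add: Q_def t_def power_mult)
  then have "gcd C Q = 1 \<longleftrightarrow> coprime (t ^ 5 * C) Q"
    by (simp add: coprime_iff_gcd_eq_1[symmetric])
  also have "\<dots> \<longleftrightarrow> coprime (1 + t + t\<^sup>2) Q"
    using coprime_left_iff_of_dvd_diff[OF Q_dvd] by simp
  also have "\<dots> \<longleftrightarrow> gcd m (3 * k) = gcd m k"
    unfolding Q_def t_def
    by (rule coprime_trinomial_x_pow_sub_one_iff[OF three_gf2_neq_zero])
  finally show ?thesis
    by (simp add: C_def Q_def monom_eq)
qed

end
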